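(* Let $\mathcal{X}\subset\mathbb{R}^n$ be a compact state space with safe set $\mathcal{S}\subset\mathcal{X}$, and suppose the following two assumptions hold. (A1) For the dynamical system $\dot{\bm{x}}(t)=f(\bm{x}(t),\bm{u}(t))$, $\bm{u}(t)\in\mathcal{U}$ compact, for any goal set $\mathcal{G}\subset\mathcal{S}$ there exists a policy $\pi:\mathcal{X}\to\mathcal{U}$ such that every closed-loop trajectory starting in $\mathcal{S}$ reaches $\mathcal{G}$ in finite time. (A2) The cost function space $\mathcal{F}_c$ of functions $c:\mathcal{X}\to\mathbb{R}$ is uniformly equicontinuous and there is $\theta>0$ with $1/\theta<\inf_{\mathcal{X}} c$ and $\sup_{\mathcal{X}}c<\theta$ for all $c\in\mathcal{F}_c$. For $c\in\mathcal{F}_c$ and points $\bm{x},\bm{y}\in\mathcal{S}$, let $V(\bm{x},\bm{y})$ denote the value (viscosity solution of $\|\nabla V\|=c$ on $\mathcal{S}\setminus\{\bm{y}\}$, $V=c$ at the goal $\bm{y}$) at $\bm{x}$ for the goal $\mathcal{G}=\{\bm{y}\}$, and let $\Psi$ be the corresponding solution operator $c\mapsto V(\cdot,\bm{g})$ for a fixed goal $\bm{g}$. Let $\hat\Psi$ be a neural operator with $\sup_{c\in\mathcal{F}_c}\|\Psi(c)-\hat\Psi(c)\|\le\epsilon_{NO}$ (uniform norm), and let $\hat V(\bm{x})=(\hat\Psi(c))(\bm{x})$. Then $\hat V$ is an $\epsilon$-consistent heuristic with $$\epsilon=\max_{\{\bm{x},\bm{y}\in\mathcal{S}\,\mid\,\bm{x}\ne\bm{y}\}}1+\frac{2\epsilon_{NO}}{V(\bm{x},\bm{y})}.$$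 Further, for a prescribed $\epsilon>1$, for $\hat V$ to satisfy $\epsilon$-consistency it suffices that the neural operator error satisfies $$\epsilon_{NO}\le\min_{\{\bm{x},\bm{y}\in\mathcal{S}\,\mid\,\bm{x}\ne\bm{y}\}}\frac{(\epsilon-1)\,V(\bm{x},\bm{y})}{2}.$$
   Context: A heuristic function $h:\mathcal{X}\to\mathbb{R}$ (for goal $\bm{g}$) is consistent if $h(\bm{x})\le V(\bm{x},\bm{y})+h(\bm{y})$ for all $\bm{x},\bm{y}$, and for $\epsilon>1$ it is $\epsilon$-consistent if $h(\bm{x})\le\epsilon V(\bm{x},\bm{y})+h(\bm{y})$ for all $\bm{x},\bm{y}$. A neural operator is a composition of a pointwise lifting neural network, layers of the form $v\mapsto\sigma(Wv(\bm{x})+b+\int K(\bm{x},\bm{y})v(\bm{y})d\bm{y})$, and a pointwise projection neural network. *)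

theory Defs
  imports "HOL-Analysis.Analysis"
begin

text \<open>The ODE is required to hold at every interior
  time except finitely many (to allow concatenation of trajectories).\<close>
definition admissible_traj ::
  "(real^'n \<Rightarrow> real^'m \<Rightarrow> real^'n) \<Rightarrow> (real^'m) set \<Rightarrow> (real^'n) set \<Rightarrow>
   real^'n \<Rightarrow> real^'n \<Rightarrow> real \<Rightarrow> (real \<Rightarrow> real^'n) \<Rightarrow> (real \<Rightarrow> real^'m) \<Rightarrow> bool" where
  "admissible_traj f U S x y T \<gamma> u \<longleftrightarrow>
     T \<ge> 0 \<and> \<gamma> 0 = x \<and> \<gamma> T = y \<and> continuous_on {0..T} \<gamma> \<and>
     (\<forall>t\<in>{0..T}. \<gamma> t \<in> S \<and> u t \<in> U) \<and>
     (\<exists>K. finite K \<and> (\<forall>t\<in>{0<..<T} - K. (\<gamma> has_vector_derivative f (\<gamma> t) (u t)) (at t)))"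

definition value_fun ::
  "(real^'n \<Rightarrow> real^'m \<Rightarrow> real^'n) \<Rightarrow> (real^'m) set \<Rightarrow> (real^'n) set \<Rightarrow>
   (real^'n \<Rightarrow> real) \<Rightarrow> real^'n \<Rightarrow> real^'n \<Rightarrow> real" where
  "value_fun f U S c x y =
     Inf {integral {0..T} (\<lambda>t. c (\<gamma> t)) | T \<gamma> u. admissible_traj f U S x y T \<gamma> u}"

definition closed_loop_traj ::
  "(real^'n \<Rightarrow> real^'m \<Rightarrow> real^'n) \<Rightarrow> (real^'n \<Rightarrow> real^'m) \<Rightarrow> real^'n \<Rightarrow> (real \<Rightarrow> real^'n) \<Rightarrow> bool" where
  "closed_loop_traj f \<pi> x0 \<gamma> \<longleftrightarrow>
     \<gamma> 0 = x0 \<and> (\<forall>t\<ge>0. (\<gamma> has_vector_derivative f (\<gamma> t) (\<pi> (\<gamma> t))) (at t within {0..}))"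

definition reachability_assumption ::
  "(real^'n \<Rightarrow> real^'m \<Rightarrow> real^'n) \<Rightarrow> (real^'m) set \<Rightarrow> (real^'n) set \<Rightarrow> (real^'n) set \<Rightarrow> bool" where
  "reachability_assumption f U X S \<longleftrightarrow>
     (\<forall>G. G \<subseteq> S \<and> G \<noteq> {} \<longrightarrow>
        (\<exists>\<pi>. (\<forall>x\<in>X. \<pi> x \<in> U) \<and>
             (\<forall>x0\<in>S. (\<exists>\<gamma>. closed_loop_traj f \<pi> x0 \<gamma>) \<and>
                (\<forall>\<gamma>. closed_loop_traj f \<pi> x0 \<gamma> \<longrightarrow>
                   (\<exists>T\<ge>0. \<gamma> T \<in> G \<and> (\<forall>t\<in>{0..T}. \<gamma> t \<in> S))))))"

definition cost_space_assumption :: "(real^'n) set \<Rightarrow> ((real^'n \<Rightarrow> real) set) \<Rightarrow> bool" where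
  "cost_space_assumption X Fc \<longleftrightarrow>
     (\<forall>e>0. \<exists>d>0. \<forall>c\<in>Fc. \<forall>x\<in>X. \<forall>y\<in>X. dist x y < d \<longrightarrow> \<bar>c x - c y\<bar> < e) \<and>
     (\<exists>\<theta>>0. \<forall>c\<in>Fc. 1 / \<theta> < Inf (c ` X) \<and> Sup (c ` X) < \<theta>)"

definition eps_consistent :: "'a set \<Rightarrow> ('a \<Rightarrow> 'a \<Rightarrow> real) \<Rightarrow> ('a \<Rightarrow> real) \<Rightarrow> real \<Rightarrow> bool" where
  "eps_consistent A V h \<epsilon> \<longleftrightarrow> (\<forall>x\<in>A. \<forall>y\<in>A. h x \<le> \<epsilon> * V x y + h y)"

text \<open>Finite-dimensional vectors are represented as \<open>nat \<Rightarrow> real\<close> with explicit dimensions.\<close>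
definition aff :: "nat \<Rightarrow> (nat \<Rightarrow> nat \<Rightarrow> real) \<Rightarrow> (nat \<Rightarrow> real) \<Rightarrow> (nat \<Rightarrow> real) \<Rightarrow> (nat \<Rightarrow> real)" where
  "aff m W b v = (\<lambda>i. (\<Sum>j<m. W i j * v j) + b i)"

fun nn_tail :: "(real \<Rightarrow> real) \<Rightarrow> nat \<Rightarrow> (nat \<times> (nat \<Rightarrow> nat \<Rightarrow> real) \<times> (nat \<Rightarrow> real)) list \<Rightarrow>
    (nat \<Rightarrow> real) \<Rightarrow> (nat \<Rightarrow> real)" where
  "nn_tail \<sigma> m [] v = v"
| "nn_tail \<sigma> m ((k, W, b) # ls) v = nn_tail \<sigma> k ls (aff m W b (\<lambda>j. \<sigma> (v j)))"

fun nn_out_dim :: "nat \<Rightarrow> (nat \<times> (nat \<Rightarrow> nat \<Rightarrow> real) \<times> (nat \<Rightarrow> real)) list \<Rightarrow> nat" where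
  "nn_out_dim m [] = m"
| "nn_out_dim m ((k, W, b) # ls) = nn_out_dim k ls"

fun no_layers :: "(real \<Rightarrow> real) \<Rightarrow> nat \<Rightarrow> (real^'n) set \<Rightarrow>
    ((nat \<Rightarrow> nat \<Rightarrow> real) \<times> (nat \<Rightarrow> real) \<times> (real^'n \<Rightarrow> real^'n \<Rightarrow> nat \<Rightarrow> nat \<Rightarrow> real)) list \<Rightarrow>
    (real^'n \<Rightarrow> nat \<Rightarrow> real) \<Rightarrow> (real^'n \<Rightarrow> nat \<Rightarrow> real)" where
  "no_layers \<sigma> d X [] v = v"
| "no_layers \<sigma> d X ((W, b, K) # ls) v =
     no_layers \<sigma> d X ls
       (\<lambda>x i. \<sigma> ((\<Sum>j<d. W i j * v x j) + b i +
                  (\<Sum>j<d. integral X (\<lambda>y. K x y i j * v y j))))"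

text \<open>A neural operator on X: pointwise lifting network (input (x, c(x)), first layer affine),
  integral kernel layers, pointwise projection network (output dimension 1).\<close>
definition neural_operator :: "(real^'n) set \<Rightarrow> ((real^'n \<Rightarrow> real) \<Rightarrow> (real^'n \<Rightarrow> real)) \<Rightarrow> bool" where
  "neural_operator X \<Psi> \<longleftrightarrow>
     (\<exists>\<sigma> d d0 (Wx :: nat \<Rightarrow> real^'n) wc b0 liftL layers projL.
        nn_out_dim d0 liftL = d \<and> nn_out_dim d projL = 1 \<and>
        (\<forall>c. \<forall>x\<in>X. \<Psi> c x =
           nn_tail \<sigma> d
             projL
             (no_layers \<sigma> d X layers
                (\<lambda>y. nn_tail \<sigma> d0 liftL (\<lambda>i. inner (Wx i) y + wc i * c y + b0 i)) x) 0))"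

end

theory Submission
  imports Defs
begin

text \<open>The value function V is a quasi-metric on the safe set: concatenating admissible
  trajectories gives the triangle inequality, and since the speed along trajectories is bounded
  by some M while the cost is bounded below by some m > 0, reaching y from x costs at least
  m |y - x| / M, so V(x,y) > 0 for x \<noteq> y. Writing h for the operator's output, the triangle
  inequality V(x,g) \<le> V(x,y) + V(y,g) together with |V(.,g) - h| \<le> eNO gives
  h(x) \<le> V(x,y) + h(y) + 2 eNO, and either bound on \<epsilon> makes 2 eNO \<le> (\<epsilon> - 1) V(x,y).\<close>

lemma cInf_le_add:
  fixes A B C :: "'a::{conditionally_complete_linorder, ordered_ab_group_add} set"
  assumes "A \<noteq> {}" and "B \<noteq> {}" and "bdd_below C"
    and "\<And>a b. a \<in> A \<Longrightarrow> b \<in> B \<Longrightarrow> a + b \<in> C"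
  shows "Inf C \<le> Inf A + Inf B"
proof -
  have "Inf C - b \<le> Inf A" if "b \<in> B" for b
  proof (rule cInf_greatest[OF assms(1)])
    fix a
    assume "a \<in> A"
    with that assms(3,4) have "Inf C \<le> a + b"
      by (simp add: cInf_lower)
    then show "Inf C - b \<le> a"
      by (simp add: diff_le_eq)
  qed
  then have "Inf C - Inf A \<le> Inf B"
    using assms(2) by (intro cInf_greatest) (auto simp: diff_le_eq add.commute)
  then show ?thesis
    by (simp add: diff_le_eq add.commute)
qed

lemma continuous_on_compact_Times_norm_bound:
  assumes "compact X" and "compact U" and "continuous_on (X \<times> U) (\<lambda>(x, u). f x u)"
  obtains M where "0 < M" and "\<forall>x\<in>X. \<forall>u\<in>U. norm (f x u) \<le> M"
proof -
  have "bounded ((\<lambda>(x, u). f x u) ` (X \<times> U))"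
    using compact_continuous_image[OF assms(3) compact_Times[OF assms(1,2)]]
    by (rule compact_imp_bounded)
  then obtain M where "0 < M" "\<forall>z\<in>(\<lambda>(x, u). f x u) ` (X \<times> U). norm z \<le> M"
    by (auto simp: bounded_pos)
  with that show thesis
    by force
qed

definition join_at :: "real \<Rightarrow> (real \<Rightarrow> 'a) \<Rightarrow> (real \<Rightarrow> 'a) \<Rightarrow> real \<Rightarrow> 'a" where
  "join_at T p q t = (if t \<le> T then p t else q (t - T))"

lemma continuous_on_join_at:
  assumes "continuous_on {0..T1} p" "continuous_on {0..T2} q" "p T1 = q 0" "0 \<le> T1" "0 \<le> T2"
  shows "continuous_on {0..T1 + T2} (join_at T1 p q)"
proof -
  have "continuous_on {T1..T1 + T2} (\<lambda>t. q (t - T1))"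
    by (rule continuous_on_compose2[OF assms(2)]) (auto intro!: continuous_intros)
  then have "continuous_on {T1..T1 + T2} (join_at T1 p q)"
    by (rule continuous_on_eq) (auto simp: join_at_def assms(3))
  moreover have "continuous_on {0..T1} (join_at T1 p q)"
    using assms(1) by (rule continuous_on_eq) (auto simp: join_at_def)
  moreover have "{0..T1 + T2} = {0..T1} \<union> {T1..T1 + T2}"
    using assms(4,5) by auto
  ultimately show ?thesis
    by (metis closed_atLeastAtMost continuous_on_closed_Un)
qed

lemma has_vector_derivative_join_at_left:
  assumes "(p has_vector_derivative v) (at t)" "t < T"
  shows "(join_at T p q has_vector_derivative v) (at t)"
  by (rule has_vector_derivative_transform_within_open[OF assms(1), of "{..<T}"])
     (use assms(2) in \<open>auto simp: join_at_def\<close>)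

lemma has_vector_derivative_join_at_right:
  assumes "(q has_vector_derivative v) (at (t - T))" "T < t"
  shows "(join_at T p q has_vector_derivative v) (at t)"
proof -
  have "((\<lambda>s. s - T) has_vector_derivative 1) (at t)"
    by (auto intro!: derivative_eq_intros)
  from vector_diff_chain_at[OF this assms(1)]
  have "((\<lambda>s. q (s - T)) has_vector_derivative v) (at t)"
    by (simp add: o_def)
  then show ?thesis
    by (rule has_vector_derivative_transform_within_open[of _ _ _ "{T<..}"])
       (use assms(2) in \<open>auto simp: join_at_def\<close>)
qed

lemma integral_join_at:
  fixes p q :: "real \<Rightarrow> 'a::banach"
  assumes "join_at T1 p q integrable_on {0..T1 + T2}" "p T1 = q 0" "0 \<le> T1" "0 \<le> T2"
  shows "integral {0..T1 + T2} (join_at T1 p q) = integral {0..T1} p + integral {0..T2} q"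
proof -
  have "integral {0..T1 + T2} (join_at T1 p q)
      = integral {0..T1} (join_at T1 p q) + integral {T1..T1 + T2} (join_at T1 p q)"
    using assms(1,3,4) by (simp add: Henstock_Kurzweil_Integration.integral_combine)
  also have "integral {0..T1} (join_at T1 p q) = integral {0..T1} p"
    by (rule integral_cong) (simp add: join_at_def)
  also have "integral {T1..T1 + T2} (join_at T1 p q) = integral {T1..T1 + T2} (\<lambda>t. q (t - T1))"
    by (rule integral_cong) (auto simp: join_at_def assms(2))
  also have "\<dots> = integral {0..T2} q"
    using integral_shift_real_ivl[where f = "\<lambda>t. q (t - T1)" and a = T1 and b = "T1 + T2" and c = T1]
    by simp
  finally show ?thesis .
qed

lemma admissible_traj_join:
  assumes "admissible_traj f U S x y T1 \<gamma>1 u1" and "admissible_traj f U S y z T2 \<gamma>2 u2"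
  shows "admissible_traj f U S x z (T1 + T2) (join_at T1 \<gamma>1 \<gamma>2) (join_at T1 u1 u2)"
proof -
  from assms obtain K1 K2 where
        T1: "0 \<le> T1" "\<gamma>1 0 = x" "\<gamma>1 T1 = y" "continuous_on {0..T1} \<gamma>1"
      "\<forall>t\<in>{0..T1}. \<gamma>1 t \<in> S \<and> u1 t \<in> U"
      "finite K1" "\<forall>t\<in>{0<..<T1} - K1. (\<gamma>1 has_vector_derivative f (\<gamma>1 t) (u1 t)) (at t)"
    and T2: "0 \<le> T2" "\<gamma>2 0 = y" "\<gamma>2 T2 = z" "continuous_on {0..T2} \<gamma>2"
      "\<forall>t\<in>{0..T2}. \<gamma>2 t \<in> S \<and> u2 t \<in> U"
      "finite K2" "\<forall>t\<in>{0<..<T2} - K2. (\<gamma>2 has_vector_derivative f (\<gamma>2 t) (u2 t)) (at t)"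
    unfolding admissible_traj_def by blast
  let ?\<gamma> = "join_at T1 \<gamma>1 \<gamma>2" and ?u = "join_at T1 u1 u2"
  define K where "K = K1 \<union> {T1} \<union> (\<lambda>t. t + T1) ` K2"
  have "(?\<gamma> has_vector_derivative f (?\<gamma> t) (?u t)) (at t)" if t: "t \<in> {0<..<T1 + T2} - K" for t
  proof (cases "t < T1")
    case True
    with t have "t \<in> {0<..<T1} - K1"
      by (auto simp: K_def)
    with T1(7) True show ?thesis
      by (simp add: join_at_def has_vector_derivative_join_at_left)
  next
    case False
    with t have "T1 < t" "t - T1 \<in> {0<..<T2} - K2"
      by (auto simp: K_def image_iff)
    with T2(7) show ?thesis
      by (simp add: join_at_def has_vector_derivative_join_at_right)
  qed
  moreover have "finite K"
    using T1(6) T2(6) by (simp add: K_def)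
  moreover have "continuous_on {0..T1 + T2} ?\<gamma>"
    using T1 T2 by (intro continuous_on_join_at) auto
  moreover have "\<forall>t\<in>{0..T1 + T2}. ?\<gamma> t \<in> S \<and> ?u t \<in> U"
    using T1(5) T2(5) by (auto simp: join_at_def)
  moreover have "?\<gamma> 0 = x" "?\<gamma> (T1 + T2) = z"
    using T1(1-3) T2(1-3) by (auto simp: join_at_def)
  ultimately show ?thesis
    using T1(1) T2(1) unfolding admissible_traj_def by auto
qed

lemma admissible_traj_cost_integrable:
  fixes c :: "real^'n \<Rightarrow> 'a::banach"
  assumes "admissible_traj f U S x y T \<gamma> u" and "continuous_on S c"
  shows "(\<lambda>t. c (\<gamma> t)) integrable_on {0..T}"
proof -
  from assms(1) have "continuous_on {0..T} \<gamma>" "\<gamma> ` {0..T} \<subseteq> S"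
    unfolding admissible_traj_def by auto
  then have "continuous_on {0..T} (\<lambda>t. c (\<gamma> t))"
    using continuous_on_compose2[OF assms(2)] by blast
  then show ?thesis
    by (rule integrable_continuous_real)
qed

lemma admissible_traj_cost_ge:
  fixes c :: "real^'n \<Rightarrow> real"
  assumes "admissible_traj f U S x y T \<gamma> u" and "continuous_on S c" and "\<forall>z\<in>S. m \<le> c z"
  shows "m * T \<le> integral {0..T} (\<lambda>t. c (\<gamma> t))"
proof -
  from assms(1) have T: "0 \<le> T" and inS: "\<forall>t\<in>{0..T}. \<gamma> t \<in> S"
    unfolding admissible_traj_def by auto
  have "integral {0..T} (\<lambda>t. m) \<le> integral {0..T} (\<lambda>t. c (\<gamma> t))"
    using assms(3) inS admissible_traj_cost_integrable[OF assms(1,2)] by (intro integral_le) auto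
  then show ?thesis
    using T by (simp add: mult.commute)
qed

lemma admissible_traj_displacement_le:
  assumes "admissible_traj f U S x y T \<gamma> u" and "\<forall>z\<in>S. \<forall>v\<in>U. norm (f z v) \<le> M"
  shows "norm (y - x) \<le> M * T"
proof -
  from assms(1) obtain K where T: "0 \<le> T" "\<gamma> 0 = x" "\<gamma> T = y" "continuous_on {0..T} \<gamma>"
      and inS: "\<forall>t\<in>{0..T}. \<gamma> t \<in> S \<and> u t \<in> U" and K: "finite K"
      and der: "\<forall>t\<in>{0<..<T} - K. (\<gamma> has_vector_derivative f (\<gamma> t) (u t)) (at t)"
    unfolding admissible_traj_def by blast
  have "((\<lambda>t. f (\<gamma> t) (u t)) has_integral \<gamma> T - \<gamma> 0) {0..T}"
    using K T(1) T(4) der by (intro fundamental_theorem_of_calculus_interior_strong) auto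
  moreover have "0 \<le> M"
    using assms(2) inS T(1) by (meson atLeastAtMost_iff norm_ge_zero order.trans order_refl)
  ultimately have "norm (\<gamma> T - \<gamma> 0) \<le> M * T"
    using has_integral_bound_real[of M "{}" "\<lambda>t. f (\<gamma> t) (u t)" _ 0 T] assms(2) inS T(1)
    by auto
  then show ?thesis
    using T(2,3) by simp
qed

lemma reachability_imp_admissible_traj:
  assumes "reachability_assumption f U X S" and "S \<subseteq> X" and "x \<in> S" and "y \<in> S"
  shows "\<exists>T \<gamma> u. admissible_traj f U S x y T \<gamma> u"
proof -
  have goal: "{y} \<subseteq> S \<and> {y} \<noteq> {}"
    using assms(4) by simp
  obtain \<pi> where \<pi>U: "\<forall>z\<in>X. \<pi> z \<in> U" and
    reach: "\<forall>x0\<in>S. (\<exists>\<gamma>. closed_loop_traj f \<pi> x0 \<gamma>) \<and>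
      (\<forall>\<gamma>. closed_loop_traj f \<pi> x0 \<gamma> \<longrightarrow> (\<exists>T\<ge>0. \<gamma> T \<in> {y} \<and> (\<forall>t\<in>{0..T}. \<gamma> t \<in> S)))"
    using assms(1)[unfolded reachability_assumption_def, rule_format, OF goal] by blast
  with assms(3) obtain \<gamma> T where cl: "closed_loop_traj f \<pi> x \<gamma>"
    and T: "0 \<le> T" "\<gamma> T = y" "\<forall>t\<in>{0..T}. \<gamma> t \<in> S"
    by blast
  have der: "(\<gamma> has_vector_derivative f (\<gamma> t) (\<pi> (\<gamma> t))) (at t within {0..})" if "0 \<le> t" for t
    using cl that unfolding closed_loop_traj_def by blast
  then have "continuous_on {0..} \<gamma>"
    by (auto simp: continuous_on_eq_continuous_within intro: has_vector_derivative_continuous)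
  then have "continuous_on {0..T} \<gamma>"
    by (rule continuous_on_subset) auto
  moreover have "(\<gamma> has_vector_derivative f (\<gamma> t) (\<pi> (\<gamma> t))) (at t)" if "t \<in> {0<..<T} - {}" for t
    using der[of t] that at_within_interior[of t "{0..}"] by auto
  moreover have "\<forall>t\<in>{0..T}. \<gamma> t \<in> S \<and> \<pi> (\<gamma> t) \<in> U"
    using T(3) \<pi>U assms(2) by blast
  moreover have "\<gamma> 0 = x"
    using cl unfolding closed_loop_traj_def by simp
  ultimately have "admissible_traj f U S x y T \<gamma> (\<lambda>t. \<pi> (\<gamma> t))"
    using T(1,2) unfolding admissible_traj_def by (metis finite.emptyI)
  then show ?thesis
    by blast
qed

lemma bdd_below_traj_costs:
  fixes c :: "real^'n \<Rightarrow> real"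
  assumes "continuous_on S c" and "\<forall>z\<in>S. 0 \<le> c z"
  shows "bdd_below {integral {0..T} (\<lambda>t. c (\<gamma> t)) | T \<gamma> u. admissible_traj f U S x y T \<gamma> u}"
proof (rule bdd_belowI)
  fix a
  assume "a \<in> {integral {0..T} (\<lambda>t. c (\<gamma> t)) | T \<gamma> u. admissible_traj f U S x y T \<gamma> u}"
  then obtain T \<gamma> u where "a = integral {0..T} (\<lambda>t. c (\<gamma> t))" "admissible_traj f U S x y T \<gamma> u"
    by blast
  with admissible_traj_cost_ge[of f U S x y T \<gamma> u c 0] assms show "0 \<le> a"
    by simp
qed

lemma value_fun_triangle:
  fixes c :: "real^'n \<Rightarrow> real"
  assumes "continuous_on S c" and "\<forall>z\<in>S. 0 \<le> c z"
    and "\<exists>T \<gamma> u. admissible_traj f U S x y T \<gamma> u" and "\<exists>T \<gamma> u. admissible_traj f U S y z T \<gamma> u"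
  shows "value_fun f U S c x z \<le> value_fun f U S c x y + value_fun f U S c y z"
  unfolding value_fun_def
proof (rule cInf_le_add)
  fix a b
  assume "a \<in> {integral {0..T} (\<lambda>t. c (\<gamma> t)) | T \<gamma> u. admissible_traj f U S x y T \<gamma> u}"
    and "b \<in> {integral {0..T} (\<lambda>t. c (\<gamma> t)) | T \<gamma> u. admissible_traj f U S y z T \<gamma> u}"
  then obtain T1 \<gamma>1 u1 T2 \<gamma>2 u2 where
      a: "a = integral {0..T1} (\<lambda>t. c (\<gamma>1 t))" and adm1: "admissible_traj f U S x y T1 \<gamma>1 u1"
    and b: "b = integral {0..T2} (\<lambda>t. c (\<gamma>2 t))" and adm2: "admissible_traj f U S y z T2 \<gamma>2 u2"
    by blast
  let ?\<gamma> = "join_at T1 \<gamma>1 \<gamma>2"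
  have adm: "admissible_traj f U S x z (T1 + T2) ?\<gamma> (join_at T1 u1 u2)"
    using adm1 adm2 by (rule admissible_traj_join)
  have cost: "(\<lambda>t. c (?\<gamma> t)) = join_at T1 (\<lambda>t. c (\<gamma>1 t)) (\<lambda>t. c (\<gamma>2 t))"
    by (auto simp: join_at_def)
  have "a + b = integral {0..T1 + T2} (\<lambda>t. c (?\<gamma> t))"
    unfolding cost a b
    using admissible_traj_cost_integrable[OF adm assms(1)] adm1 adm2
    by (intro integral_join_at[symmetric]) (auto simp: cost admissible_traj_def)
  with adm show "a + b \<in> {integral {0..T} (\<lambda>t. c (\<gamma> t)) | T \<gamma> u. admissible_traj f U S x z T \<gamma> u}"
    by blast
qed (use assms bdd_below_traj_costs in auto)

lemma value_fun_ge_dist: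
  fixes c :: "real^'n \<Rightarrow> real"
  assumes "\<exists>T \<gamma> u. admissible_traj f U S x y T \<gamma> u"
    and "continuous_on S c" and "\<forall>z\<in>S. m \<le> c z" and "0 \<le> m"
    and "\<forall>z\<in>S. \<forall>v\<in>U. norm (f z v) \<le> M" and "0 < M"
  shows "m * norm (y - x) / M \<le> value_fun f U S c x y"
  unfolding value_fun_def
proof (rule cInf_greatest)
  fix a
  assume "a \<in> {integral {0..T} (\<lambda>t. c (\<gamma> t)) | T \<gamma> u. admissible_traj f U S x y T \<gamma> u}"
  then obtain T \<gamma> u where a: "a = integral {0..T} (\<lambda>t. c (\<gamma> t))"
    and adm: "admissible_traj f U S x y T \<gamma> u"
    by blast
  have "norm (y - x) / M \<le> T"
    using admissible_traj_displacement_le[OF adm assms(5)] assms(6) by (simp add: divide_le_eq mult.commute)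
  then have "m * (norm (y - x) / M) \<le> m * T"
    using assms(4) by (rule mult_left_mono)
  also have "\<dots> \<le> a"
    unfolding a using adm assms(2,3) by (rule admissible_traj_cost_ge)
  finally show "m * norm (y - x) / M \<le> a"
    by simp
qed (use assms(1) in auto)

lemma value_fun_quasi_metric:
  fixes c :: "real^'n \<Rightarrow> real"
  assumes "compact X" and "S \<subseteq> X" and "compact U" and "continuous_on (X \<times> U) (\<lambda>(x, u). f x u)"
    and "reachability_assumption f U X S"
    and "continuous_on S c" and "\<forall>z\<in>S. m \<le> c z" and "0 < m"
  shows "\<And>x. x \<in> S \<Longrightarrow> 0 \<le> value_fun f U S c x x"
    and "\<And>x y. x \<in> S \<Longrightarrow> y \<in> S \<Longrightarrow> x \<noteq> y \<Longrightarrow> 0 < value_fun f U S c x y"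
    and "\<And>x y z. x \<in> S \<Longrightarrow> y \<in> S \<Longrightarrow> z \<in> S \<Longrightarrow>
      value_fun f U S c x z \<le> value_fun f U S c x y + value_fun f U S c y z"
proof -
  obtain M where "0 < M" and "\<forall>x\<in>X. \<forall>u\<in>U. norm (f x u) \<le> M"
    using continuous_on_compact_Times_norm_bound[OF assms(1,3,4)] .
  then have speed: "\<forall>z\<in>S. \<forall>v\<in>U. norm (f z v) \<le> M"
    using assms(2) by blast
  have reach: "\<exists>T \<gamma> u. admissible_traj f U S x y T \<gamma> u" if "x \<in> S" "y \<in> S" for x y
    using reachability_imp_admissible_traj[OF assms(5,2) that] .
  have V_ge: "m * norm (y - x) / M \<le> value_fun f U S c x y" if "x \<in> S" "y \<in> S" for x y
    using value_fun_ge_dist[OF reach[OF that] assms(6,7) _ speed \<open>0 < M\<close>] \<open>0 < m\<close> by simp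
  show "0 \<le> value_fun f U S c x x" if "x \<in> S" for x
    using V_ge[OF that that] by simp
  show "0 < value_fun f U S c x y" if "x \<in> S" "y \<in> S" "x \<noteq> y" for x y
  proof -
    have "0 < m * norm (y - x) / M"
      using that(3) \<open>0 < m\<close> \<open>0 < M\<close> by simp
    with V_ge[OF that(1,2)] show ?thesis
      by linarith
  qed
  show "value_fun f U S c x z \<le> value_fun f U S c x y + value_fun f U S c y z"
    if "x \<in> S" "y \<in> S" "z \<in> S" for x y z
    using value_fun_triangle[OF assms(6) _ reach reach] assms(7,8) that by force
qed

lemma cost_space_assumption_continuous_on:
  assumes "cost_space_assumption X Fc" and "c \<in> Fc"
  shows "continuous_on X c"
proof -
  have equi: "\<forall>e>0. \<exists>d>0. \<forall>c\<in>Fc. \<forall>x\<in>X. \<forall>y\<in>X. dist x y < d \<longrightarrow> \<bar>c x - c y\<bar> < e"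
    using assms(1) unfolding cost_space_assumption_def by (rule conjunct1)
  have "uniformly_continuous_on X c"
    unfolding uniformly_continuous_on_def dist_real_def
  proof (intro allI impI)
    fix e :: real
    assume "0 < e"
    then obtain d where "0 < d" "\<forall>x\<in>X. \<forall>y\<in>X. dist x y < d \<longrightarrow> \<bar>c x - c y\<bar> < e"
      using equi assms(2) by metis
    then show "\<exists>d>0. \<forall>x\<in>X. \<forall>x'\<in>X. dist x' x < d \<longrightarrow> \<bar>c x' - c x\<bar> < e"
      by blast
  qed
  then show ?thesis
    by (rule uniformly_continuous_imp_continuous)
qed

lemma cost_space_assumption_pos_lower_bound:
  assumes "cost_space_assumption X Fc" and "c \<in> Fc" and "compact X"
  obtains m where "0 < m" and "\<forall>x\<in>X. m \<le> c x"
proof -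
  obtain \<theta> where "0 < \<theta>" and \<theta>: "1 / \<theta> < Inf (c ` X)"
    using assms(1,2) unfolding cost_space_assumption_def by blast
  have "bdd_below (c ` X)"
    using compact_continuous_image[OF cost_space_assumption_continuous_on[OF assms(1,2)] assms(3)]
    by (simp add: compact_imp_bounded bounded_imp_bdd_below)
  then have "\<forall>x\<in>X. 1 / \<theta> \<le> c x"
    using \<theta> by (meson cInf_lower image_eqI less_imp_le order_trans)
  with \<open>0 < \<theta>\<close> show thesis
    by (intro that[of "1 / \<theta>"]) simp_all
qed

lemma eps_consistent_of_uniform_approx:
  fixes V :: "'a \<Rightarrow> 'a \<Rightarrow> real"
  assumes triangle: "\<And>x y. x \<in> A \<Longrightarrow> y \<in> A \<Longrightarrow> V x g \<le> V x y + V y g"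
    and diag: "\<And>x. x \<in> A \<Longrightarrow> 0 \<le> V x x"
    and approx: "\<And>x. x \<in> A \<Longrightarrow> \<bar>V x g - h x\<bar> \<le> e"
    and "0 \<le> \<epsilon>"
    and margin: "\<And>x y. x \<in> A \<Longrightarrow> y \<in> A \<Longrightarrow> x \<noteq> y \<Longrightarrow> 2 * e \<le> (\<epsilon> - 1) * V x y"
  shows "eps_consistent A V h \<epsilon>"
  unfolding eps_consistent_def
proof (intro ballI)
  fix x y
  assume x: "x \<in> A" and y: "y \<in> A"
  show "h x \<le> \<epsilon> * V x y + h y"
  proof (cases "x = y")
    case True
    with diag[OF x] \<open>0 \<le> \<epsilon>\<close> show ?thesis
      by simp
  next
    case False
    have "h x \<le> V x y + h y + 2 * e"
      using approx[OF x] approx[OF y] triangle[OF x y] by linarith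
    with margin[OF x y False] show ?thesis
      by (simp add: algebra_simps)
  qed
qed

lemma eps_consistent_of_max_ratio:
  fixes V :: "'a \<Rightarrow> 'a \<Rightarrow> real"
  assumes triangle: "\<And>x y. x \<in> A \<Longrightarrow> y \<in> A \<Longrightarrow> V x g \<le> V x y + V y g"
    and diag: "\<And>x. x \<in> A \<Longrightarrow> 0 \<le> V x x"
    and approx: "\<And>x. x \<in> A \<Longrightarrow> \<bar>V x g - h x\<bar> \<le> e"
    and "0 \<le> e"
    and pos: "\<And>x y. x \<in> A \<Longrightarrow> y \<in> A \<Longrightarrow> x \<noteq> y \<Longrightarrow> 0 < V x y"
    and \<epsilon>: "\<epsilon> \<in> {1 + 2 * e / V x y | x y. x \<in> A \<and> y \<in> A \<and> x \<noteq> y}"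
    and max: "\<forall>r\<in>{1 + 2 * e / V x y | x y. x \<in> A \<and> y \<in> A \<and> x \<noteq> y}. r \<le> \<epsilon>"
  shows "eps_consistent A V h \<epsilon>"
proof (rule eps_consistent_of_uniform_approx[where A = A and V = V and g = g and h = h and e = e,
      OF triangle diag approx])
  show "0 \<le> \<epsilon>"
    using \<epsilon> pos \<open>0 \<le> e\<close> by force
  fix x y
  assume xy: "x \<in> A" "y \<in> A" "x \<noteq> y"
  with max have "2 * e / V x y \<le> \<epsilon> - 1"
    by force
  with pos[OF xy] show "2 * e \<le> (\<epsilon> - 1) * V x y"
    by (simp add: divide_le_eq)
qed

theorem lemma1:
  fixes X S :: "(real^'n) set"
    and U :: "(real^'m) set"
    and f :: "real^'n \<Rightarrow> real^'m \<Rightarrow> real^'n"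
    and Fc :: "(real^'n \<Rightarrow> real) set"
    and \<Psi>hat :: "(real^'n \<Rightarrow> real) \<Rightarrow> (real^'n \<Rightarrow> real)"
    and c :: "real^'n \<Rightarrow> real"
    and g :: "real^'n"
    and eNO :: real
  assumes "compact X" and "S \<subseteq> X" and "compact U"
    and "continuous_on (X \<times> U) (\<lambda>(x, u). f x u)"
    and "reachability_assumption f U X S"
    and "cost_space_assumption X Fc"
    and "g \<in> S"
    and "neural_operator X \<Psi>hat"
    and "\<forall>c'\<in>Fc. \<forall>x\<in>S. \<bar>value_fun f U S c' x g - \<Psi>hat c' x\<bar> \<le> eNO"
    and "c \<in> Fc"
  shows "(\<forall>\<epsilon>. \<epsilon> \<in> {1 + 2 * eNO / value_fun f U S c x y | x y. x \<in> S \<and> y \<in> S \<and> x \<noteq> y} \<and>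
             (\<forall>z\<in>{1 + 2 * eNO / value_fun f U S c x y | x y. x \<in> S \<and> y \<in> S \<and> x \<noteq> y}. z \<le> \<epsilon>)
           \<longrightarrow> eps_consistent S (value_fun f U S c) (\<Psi>hat c) \<epsilon>)
       \<and> (\<forall>\<epsilon>>1. (\<forall>x\<in>S. \<forall>y\<in>S. x \<noteq> y \<longrightarrow> eNO \<le> (\<epsilon> - 1) * value_fun f U S c x y / 2)
           \<longrightarrow> eps_consistent S (value_fun f U S c) (\<Psi>hat c) \<epsilon>)"
proof -
  let ?V = "value_fun f U S c"
  obtain m where "0 < m" and "\<forall>x\<in>X. m \<le> c x"
    using cost_space_assumption_pos_lower_bound[OF assms(6,10,1)] .
  then have "\<forall>z\<in>S. m \<le> c z"
    using assms(2) by blast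
  moreover have "continuous_on S c"
    using cost_space_assumption_continuous_on[OF assms(6,10)] assms(2) by (rule continuous_on_subset)
  ultimately have V_diag: "\<And>x. x \<in> S \<Longrightarrow> 0 \<le> ?V x x"
    and V_pos: "\<And>x y. x \<in> S \<Longrightarrow> y \<in> S \<Longrightarrow> x \<noteq> y \<Longrightarrow> 0 < ?V x y"
    and triangle: "\<And>x y. x \<in> S \<Longrightarrow> y \<in> S \<Longrightarrow> ?V x g \<le> ?V x y + ?V y g"
    using value_fun_quasi_metric[OF assms(1-5)] \<open>0 < m\<close> assms(7) by blast+
  have approx: "\<And>x. x \<in> S \<Longrightarrow> \<bar>?V x g - \<Psi>hat c x\<bar> \<le> eNO"
    using assms(9,10) by blast
  then have "0 \<le> eNO"
    using assms(7) by force
  show ?thesis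
  proof (intro conjI allI impI)
    fix \<epsilon>
    assume "\<epsilon> \<in> {1 + 2 * eNO / ?V x y | x y. x \<in> S \<and> y \<in> S \<and> x \<noteq> y} \<and>
      (\<forall>r\<in>{1 + 2 * eNO / ?V x y | x y. x \<in> S \<and> y \<in> S \<and> x \<noteq> y}. r \<le> \<epsilon>)"
    then show "eps_consistent S ?V (\<Psi>hat c) \<epsilon>"
      using eps_consistent_of_max_ratio[where V = ?V and g = g and h = "\<Psi>hat c",
          OF triangle V_diag approx \<open>0 \<le> eNO\<close> V_pos]
      by blast
  next
    fix \<epsilon> :: real
    assume "1 < \<epsilon>" and "\<forall>x\<in>S. \<forall>y\<in>S. x \<noteq> y \<longrightarrow> eNO \<le> (\<epsilon> - 1) * ?V x y / 2"
    then show "eps_consistent S ?V (\<Psi>hat c) \<epsilon>"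
      by (intro eps_consistent_of_uniform_approx[where V = ?V and g = g and h = "\<Psi>hat c",
          OF triangle V_diag approx]) (auto simp: mult.commute)
  qed
qed

end
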